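(* For every $\theta>0$ one has $1-4(\theta+1)\lambda(\theta)>0$, so $j$ is well defined on $(0,\infty)$, and $j$ satisfies for all $\theta>0$ \[\big(4\theta\lambda(\theta)-e^{-f'(\theta)}\big)j'(\theta)+\frac{f''(\theta)}{2}\big(4\theta^2\lambda(\theta)+e^{-f'(\theta)}\big)+4\lambda(\theta)\Big(\frac12-\theta\Big)=0.\]
   Context: Define $\lambda:[0,\infty)\to(0,1/4]$ by $\lambda(0)=1/4$ and, for $\theta>0$, $\lambda(\theta)$ is the unique $\lambda\in(0,1/4)$ with $-1+\frac{\operatorname{artanh}(\sqrt{1-4\lambda})}{\sqrt{1-4\lambda}}=\theta$. For $\theta>0$ set $f(\theta)=-\ln\lambda(\theta)-2\theta-\theta\ln\big(1-4\lambda(\theta)\big)$ and $j(\theta)=-\tfrac12\ln\big(1-4(\theta+1)\lambda(\theta)\big)+\tfrac12\ln 2$. *)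

theory Defs
  imports "HOL-Analysis.Analysis"
begin

definition lam :: "real \<Rightarrow> real" where
  "lam \<theta> = (if \<theta> = 0 then 1/4
     else THE l. 0 < l \<and> l < 1/4 \<and>
       -1 + artanh (sqrt (1 - 4*l)) / sqrt (1 - 4*l) = \<theta>)"

definition f_fun :: "real \<Rightarrow> real" where
  "f_fun \<theta> = - ln (lam \<theta>) - 2*\<theta> - \<theta> * ln (1 - 4 * lam \<theta>)"

definition j_fun :: "real \<Rightarrow> real" where
  "j_fun \<theta> = - (1/2) * ln (1 - 4*(\<theta>+1) * lam \<theta>) + (1/2) * ln 2"

end

theory Submission
  imports Defs
begin

text \<open>Put \<open>s = sqrt (1 - 4 * lam \<theta>)\<close>. The defining relation of \<open>lam\<close> says
  \<open>\<theta> = artanh s / s - 1\<close>, a strictly increasing bijection from \<open>(0, 1)\<close> onto \<open>(0, \<infinity>)\<close>,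
  so \<open>s\<close> is a differentiable function of \<open>\<theta>\<close> with \<open>s' = s (1 - s\<^sup>2) / E\<close>, where
  \<open>E = s\<^sup>2 - \<theta> (1 - s\<^sup>2) = 1 - 4 (\<theta> + 1) lam \<theta>\<close>; positivity of \<open>E\<close> is the inequality
  \<open>(1 - s\<^sup>2) artanh s < s\<close>. In terms of \<open>s\<close> one finds \<open>f' = -2 ln s\<close> (so \<open>exp (- f') = s\<^sup>2\<close>),
  \<open>f'' = -2 s' / s\<close> and \<open>j = - ln E / 2 + ln 2 / 2\<close>, and the left-hand side of the
  differential identity collapses to \<open>\<theta> / s * (s' E - s (1 - s\<^sup>2))\<close>, which vanishes.\<close>

lemma artanh_gt_self:
  fixes s :: real
  assumes "0 < s" "s < 1"
  shows "s < artanh s"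
proof -
  have "artanh 0 - 0 < artanh s - s"
  proof (rule DERIV_pos_imp_increasing_open[OF \<open>0 < s\<close>, where f = "\<lambda>x. artanh x - x"])
    fix x :: real
    assume x: "0 < x" "x < s"
    then have "x^2 < 1" "0 < x^2"
      using assms by (simp_all add: abs_square_less_1)
    then have "0 < 1 / (1 - x^2) - 1"
      by (simp add: field_simps)
    moreover have "((\<lambda>x. artanh x - x) has_real_derivative 1 / (1 - x^2) - 1) (at x)"
      using x assms by (auto intro!: derivative_eq_intros)
    ultimately show "\<exists>y. ((\<lambda>x. artanh x - x) has_real_derivative y) (at x) \<and> 0 < y"
      by blast
  qed (use assms in \<open>auto intro!: continuous_intros\<close>)
  then show ?thesis
    by simp
qed

lemma one_minus_sq_mult_artanh_less:
  fixes s :: real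
  assumes "0 < s" "s < 1"
  shows "(1 - s^2) * artanh s < s"
proof -
  let ?h = "\<lambda>x::real. x - (1 - x^2) * artanh x"
  have "?h 0 < ?h s"
  proof (rule DERIV_pos_imp_increasing_open[OF \<open>0 < s\<close>])
    fix x :: real
    assume x: "0 < x" "x < s"
    then have "x^2 < 1" "\<bar>x\<bar> < 1"
      using assms by (simp_all add: abs_square_less_1)
    then have "(?h has_real_derivative 2 * x * artanh x) (at x)"
      by (auto intro!: derivative_eq_intros)
    moreover have "0 < 2 * x * artanh x"
      using artanh_gt_self[of x] x assms by simp
    ultimately show "\<exists>y. (?h has_real_derivative y) (at x) \<and> 0 < y"
      by blast
  qed (use assms in \<open>auto intro!: continuous_intros\<close>)
  then show ?thesis
    by simp
qed

definition theta_of :: "real \<Rightarrow> real" where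
  "theta_of s = artanh s / s - 1"

lemma theta_of_has_real_derivative:
  assumes "0 < s" "s < 1"
  shows "(theta_of has_real_derivative (s - (1 - s^2) * artanh s) / (s^2 * (1 - s^2))) (at s)"
proof -
  have "s^2 < 1"
    using assms by (simp add: abs_square_less_1)
  then show ?thesis
    unfolding theta_of_def [abs_def] using assms
    by (auto intro!: derivative_eq_intros simp: field_simps power2_eq_square)
qed

lemma isCont_theta_of: "0 < s \<Longrightarrow> s < 1 \<Longrightarrow> isCont theta_of s"
  using theta_of_has_real_derivative DERIV_isCont by blast

lemma theta_of_pos: "0 < s \<Longrightarrow> s < 1 \<Longrightarrow> 0 < theta_of s"
  using artanh_gt_self by (simp add: theta_of_def field_simps)

lemma theta_of_less:
  assumes "0 < s" "s < 1"
  shows "theta_of s < s^2 / (1 - s^2)"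
proof -
  have "0 < 1 - s^2"
    using assms by (simp add: abs_square_less_1)
  then show ?thesis
    using one_minus_sq_mult_artanh_less[OF assms] assms
    by (simp add: theta_of_def field_simps)
qed

lemma theta_of_strict_mono: "strict_mono_on {0<..<1} theta_of"
proof (rule strict_mono_onI)
  fix a b :: real
  assume a: "a \<in> {0<..<1}" and b: "b \<in> {0<..<1}" and "a < b"
  show "theta_of a < theta_of b"
  proof (rule DERIV_pos_imp_increasing_open[OF \<open>a < b\<close>])
    fix x :: real
    assume "a < x" "x < b"
    then have x: "0 < x" "x < 1"
      using a b by auto
    then have "0 < (x - (1 - x^2) * artanh x) / (x^2 * (1 - x^2))"
      using one_minus_sq_mult_artanh_less[OF x] by (simp add: abs_square_less_1)
    then show "\<exists>y. (theta_of has_real_derivative y) (at x) \<and> 0 < y"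
      using theta_of_has_real_derivative[OF x] by blast
  next
    show "continuous_on {a..b} theta_of"
      using a b by (intro continuous_at_imp_continuous_on ballI isCont_theta_of) auto
  qed
qed

lemma theta_of_surj:
  assumes "0 < t"
  shows "\<exists>s. 0 < s \<and> s < 1 \<and> theta_of s = t"
proof -
  define a where "a = sqrt (t / (1 + t))"
  have a: "0 < a" "a < 1" and "a^2 = t / (1 + t)" "a^2 < 1"
    using assms by (auto simp: a_def)
  then have "a^2 / (1 - a^2) = t"
    using assms by (simp add: field_simps)
  then have lower: "theta_of a < t"
    using theta_of_less[OF a] by simp
  define b where "b = tanh (t + 1)"
  have b: "0 < b" "b < 1"
    using assms tanh_real_lt_1 by (auto simp: b_def)
  have "b * (t + 1) < 1 * (t + 1)"
    using b assms by (intro mult_strict_right_mono) auto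
  then have "t + 1 < (t + 1) / b"
    using b by (simp add: field_simps)
  then have upper: "t < theta_of b"
    by (simp add: theta_of_def b_def artanh_tanh_real)
  have "a \<le> b"
    using strict_mono_on_less[OF theta_of_strict_mono, of a b] lower upper a b by auto
  then obtain s where "a \<le> s" "s \<le> b" "theta_of s = t"
    using IVT[of theta_of a t b] lower upper a b isCont_theta_of by force
  then show ?thesis
    using a b by (intro exI[of _ s]) auto
qed

lemma lam_theta_of:
  assumes s: "0 < s" "s < 1"
  shows "lam (theta_of s) = (1 - s^2) / 4"
proof -
  let ?P = "\<lambda>l. 0 < l \<and> l < 1/4 \<and> -1 + artanh (sqrt (1 - 4*l)) / sqrt (1 - 4*l) = theta_of s"
  have "1 - 4 * ((1 - s^2) / 4) = s^2"
    by (simp add: field_simps)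
  then have "sqrt (1 - 4 * ((1 - s^2) / 4)) = s"
    using s by simp
  then have "?P ((1 - s^2) / 4)"
    using s by (simp add: theta_of_def abs_square_less_1)
  moreover have "l = (1 - s^2) / 4" if "?P l" for l
  proof -
    define r where "r = sqrt (1 - 4*l)"
    have r: "0 < r" "r < 1" "r^2 = 1 - 4*l"
      using that by (auto simp: r_def)
    have "theta_of r = theta_of s"
      using that by (simp add: theta_of_def r_def)
    then have "r = s"
      using inj_onD[OF strict_mono_on_imp_inj_on[OF theta_of_strict_mono]] r s by auto
    then show ?thesis
      using r by simp
  qed
  ultimately have "(THE l. ?P l) = (1 - s^2) / 4"
    by (rule the_equality)
  then show ?thesis
    using theta_of_pos[OF s] by (simp add: lam_def)
qed

definition s_of :: "real \<Rightarrow> real" where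
  "s_of \<theta> = sqrt (1 - 4 * lam \<theta>)"

lemma s_of_theta_of: "0 < s \<Longrightarrow> s < 1 \<Longrightarrow> s_of (theta_of s) = s"
proof -
  assume s: "0 < s" "s < 1"
  have "1 - 4 * ((1 - s^2) / 4) = s^2"
    by (simp add: field_simps)
  then show ?thesis
    using s by (simp add: s_of_def lam_theta_of)
qed

lemma
  assumes "0 < \<theta>"
  shows s_of_bounds: "0 < s_of \<theta>" "s_of \<theta> < 1"
    and theta_of_s_of: "theta_of (s_of \<theta>) = \<theta>"
  using theta_of_surj[OF assms] s_of_theta_of by auto

lemma artanh_s_of: "0 < \<theta> \<Longrightarrow> artanh (s_of \<theta>) = (\<theta> + 1) * s_of \<theta>"
  using s_of_bounds[of \<theta>] theta_of_s_of[of \<theta>] by (simp add: theta_of_def field_simps)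

lemma lam_eq_s_of: "0 < \<theta> \<Longrightarrow> lam \<theta> = (1 - s_of \<theta>^2) / 4"
  using lam_theta_of[of "s_of \<theta>"] s_of_bounds[of \<theta>] theta_of_s_of[of \<theta>] by simp

lemma gap_eq_s_of: "0 < \<theta> \<Longrightarrow> 1 - 4*(\<theta>+1) * lam \<theta> = s_of \<theta>^2 - \<theta> * (1 - s_of \<theta>^2)"
  by (simp add: lam_eq_s_of field_simps)

lemma gap_pos:
  assumes "0 < \<theta>"
  shows "0 < s_of \<theta>^2 - \<theta> * (1 - s_of \<theta>^2)"
proof -
  let ?s = "s_of \<theta>"
  have s: "0 < ?s" "?s < 1"
    by (rule s_of_bounds[OF assms])+
  then have "(1 - ?s^2) * (\<theta> + 1) * ?s < 1 * ?s"
    using one_minus_sq_mult_artanh_less[of ?s] artanh_s_of[OF assms] by (simp add: mult.assoc)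
  then have "(1 - ?s^2) * (\<theta> + 1) < 1"
    using s(1) mult_less_cancel_right_pos by blast
  then show ?thesis
    by (simp add: algebra_simps)
qed

definition s_of_deriv :: "real \<Rightarrow> real" where
  "s_of_deriv \<theta> = s_of \<theta> * (1 - s_of \<theta>^2) / (s_of \<theta>^2 - \<theta> * (1 - s_of \<theta>^2))"

lemma s_of_deriv_mult_gap:
  "0 < \<theta> \<Longrightarrow> s_of_deriv \<theta> * (s_of \<theta>^2 - \<theta> * (1 - s_of \<theta>^2)) = s_of \<theta> * (1 - s_of \<theta>^2)"
  using gap_pos[of \<theta>] by (simp add: s_of_deriv_def)

lemma s_of_has_real_derivative:
  assumes "0 < \<theta>"
  shows "(s_of has_real_derivative s_of_deriv \<theta>) (at \<theta>)"
proof -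
  let ?s = "s_of \<theta>"
  have s: "0 < ?s" "?s < 1" "theta_of ?s = \<theta>" "?s^2 < 1"
    using s_of_bounds[OF assms] theta_of_s_of[OF assms] by (auto simp: abs_square_less_1)
  have "isCont s_of (theta_of ?s)"
    by (rule isCont_inverse_function2[of "?s / 2" _ "(1 + ?s) / 2"])
       (use s in \<open>auto intro!: s_of_theta_of isCont_theta_of\<close>)
  then have "(s_of has_real_derivative inverse ((?s - (1 - ?s^2) * artanh ?s) / (?s^2 * (1 - ?s^2)))) (at \<theta>)"
    using s assms theta_of_has_real_derivative[OF s(1,2)] one_minus_sq_mult_artanh_less[OF s(1,2)]
    by (intro DERIV_inverse_function[where f = theta_of and a = 0 and b = "\<theta> + 1"])
       (auto simp: theta_of_s_of)
  moreover have "(?s - (1 - ?s^2) * artanh ?s) / (?s^2 * (1 - ?s^2))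
      = (?s^2 - \<theta> * (1 - ?s^2)) / (?s * (1 - ?s^2))"
    using s artanh_s_of[OF assms] by (simp add: field_simps power2_eq_square)
  ultimately show ?thesis
    by (simp add: s_of_deriv_def)
qed

lemma f_fun_eq_s_of:
  assumes "0 < \<theta>"
  shows "f_fun \<theta> = ln 4 - ln (1 - s_of \<theta>^2) - 2*\<theta> - 2*\<theta> * ln (s_of \<theta>)"
proof -
  have s: "0 < s_of \<theta>" "s_of \<theta>^2 < 1"
    using s_of_bounds[OF assms] by (auto simp: abs_square_less_1)
  have lam: "lam \<theta> = (1 - s_of \<theta>^2) / 4"
    by (rule lam_eq_s_of[OF assms])
  then have "1 - 4 * lam \<theta> = s_of \<theta>^2"
    by (simp add: field_simps)
  then show ?thesis
    unfolding f_fun_def lam using s by (simp add: ln_div ln_realpow)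
qed

lemma f_fun_has_real_derivative:
  assumes "0 < \<theta>"
  shows "(f_fun has_real_derivative -2 * ln (s_of \<theta>)) (at \<theta>)"
proof -
  have s: "0 < s_of \<theta>" "s_of \<theta>^2 < 1"
    using s_of_bounds[OF assms] by (auto simp: abs_square_less_1)
  have "((\<lambda>w. ln 4 - ln (1 - s_of w^2) - 2*w - 2*w * ln (s_of w))
          has_real_derivative -2 * ln (s_of \<theta>)) (at \<theta>)"
    using s s_of_deriv_mult_gap[OF assms]
    by (auto intro!: derivative_eq_intros s_of_has_real_derivative[OF assms]
             simp: field_simps power2_eq_square)
  then show ?thesis
    by (rule has_field_derivative_transform_within_open[where S = "{0<..}"])
       (use assms f_fun_eq_s_of in auto)
qed

lemma deriv_f_fun: "0 < \<theta> \<Longrightarrow> deriv f_fun \<theta> = -2 * ln (s_of \<theta>)"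
  by (rule DERIV_imp_deriv[OF f_fun_has_real_derivative])

lemma exp_neg_deriv_f_fun:
  assumes "0 < \<theta>"
  shows "exp (- deriv f_fun \<theta>) = s_of \<theta>^2"
proof -
  have "- deriv f_fun \<theta> = ln (s_of \<theta>^2)"
    using s_of_bounds[OF assms] by (simp add: deriv_f_fun[OF assms] ln_realpow)
  then show ?thesis
    using s_of_bounds[OF assms] by simp
qed

lemma deriv_f_fun_has_real_derivative:
  assumes "0 < \<theta>"
  shows "(deriv f_fun has_real_derivative -2 * s_of_deriv \<theta> / s_of \<theta>) (at \<theta>)"
proof -
  have "((\<lambda>w. -2 * ln (s_of w)) has_real_derivative -2 * s_of_deriv \<theta> / s_of \<theta>) (at \<theta>)"
    using s_of_bounds[OF assms]
    by (auto intro!: derivative_eq_intros s_of_has_real_derivative[OF assms])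
  then show ?thesis
    by (rule has_field_derivative_transform_within_open[where S = "{0<..}"])
       (use assms deriv_f_fun in auto)
qed

lemma j_fun_eq_s_of:
  "0 < \<theta> \<Longrightarrow> j_fun \<theta> = - (1/2) * ln (s_of \<theta>^2 - \<theta> * (1 - s_of \<theta>^2)) + (1/2) * ln 2"
  by (simp only: j_fun_def gap_eq_s_of)

lemma j_fun_has_real_derivative:
  assumes "0 < \<theta>"
  shows "(j_fun has_real_derivative
           - (2 * (1 + \<theta>) * s_of \<theta> * s_of_deriv \<theta> - (1 - s_of \<theta>^2))
             / (2 * (s_of \<theta>^2 - \<theta> * (1 - s_of \<theta>^2)))) (at \<theta>)"
proof -
  have "((\<lambda>w. - (1/2) * ln (s_of w^2 - w * (1 - s_of w^2)) + (1/2) * ln 2) has_real_derivative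
           - (2 * (1 + \<theta>) * s_of \<theta> * s_of_deriv \<theta> - (1 - s_of \<theta>^2))
             / (2 * (s_of \<theta>^2 - \<theta> * (1 - s_of \<theta>^2)))) (at \<theta>)"
    using gap_pos[OF assms]
    by (auto intro!: derivative_eq_intros s_of_has_real_derivative[OF assms]
             simp: field_simps power2_eq_square)
  then show ?thesis
    by (rule has_field_derivative_transform_within_open[where S = "{0<..}"])
       (use assms j_fun_eq_s_of in auto)
qed

theorem proposition3:
  fixes \<theta> :: real
  assumes "\<theta> > 0"
  shows "1 - 4*(\<theta>+1) * lam \<theta> > 0
    \<and> f_fun differentiable (at \<theta>)
    \<and> deriv f_fun differentiable (at \<theta>)
    \<and> j_fun differentiable (at \<theta>)
    \<and> (4*\<theta>*lam \<theta> - exp (- deriv f_fun \<theta>)) * deriv j_fun \<theta>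
      + deriv (deriv f_fun) \<theta> / 2 * (4*\<theta>^2*lam \<theta> + exp (- deriv f_fun \<theta>))
      + 4 * lam \<theta> * (1/2 - \<theta>) = 0"
proof -
  define s d E where "s = s_of \<theta>" and "d = s_of_deriv \<theta>"
    and "E = s^2 - \<theta> * (1 - s^2)"
  have s: "0 < s"
    using s_of_bounds[OF assms] by (simp add: s_def)
  have E: "0 < E"
    using gap_pos[OF assms] by (simp add: E_def s_def)
  have "(4*\<theta>*lam \<theta> - exp (- deriv f_fun \<theta>)) * deriv j_fun \<theta>
      + deriv (deriv f_fun) \<theta> / 2 * (4*\<theta>^2*lam \<theta> + exp (- deriv f_fun \<theta>))
      + 4 * lam \<theta> * (1/2 - \<theta>)
    = \<theta> / s * (d * E - s * (1 - s^2))"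
    unfolding exp_neg_deriv_f_fun[OF assms, folded s_def] lam_eq_s_of[OF assms, folded s_def]
      DERIV_imp_deriv[OF j_fun_has_real_derivative[OF assms], folded s_def d_def, folded E_def]
      DERIV_imp_deriv[OF deriv_f_fun_has_real_derivative[OF assms], folded s_def d_def]
    using s E by (simp add: field_simps) (simp add: E_def algebra_simps eval_nat_numeral)
  also have "\<dots> = 0"
    using s_of_deriv_mult_gap[OF assms] by (simp add: s_def d_def E_def)
  finally show ?thesis
    using gap_pos[OF assms] gap_eq_s_of[OF assms] f_fun_has_real_derivative[OF assms]
      deriv_f_fun_has_real_derivative[OF assms] j_fun_has_real_derivative[OF assms]
    by (auto simp: real_differentiable_def)
qed

end
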